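(* Let $G\in\mathbb{R}^{m\times n}$ with rows $G_1^T,\dots,G_m^T$, let $b\in\mathbb{R}^m$, and let $\mathcal{P}=\{x\in\mathbb{R}^n : Gx\le b\}$ be a polyhedron that has an interior point. Let $f_d:\mathbb{R}^n\to\mathbb{R}^n$ be continuously differentiable and consider the discrete system $x_{k+1}=f_d(x_k)$. Assume that for every $i\in\{1,\dots,m\}$ the function $x\mapsto b_i-G_i^Tf_d(x)$ is convex. Then $\mathcal{P}$ is an invariant set for this discrete system if and only if there exists a matrix $H\in\mathbb{R}^{m\times m}$ with all entries nonnegative such that $$HGx-Gf_d(x)\ge Hb-b\quad\text{for all } x\in\mathbb{R}^n,$$ where the inequality between vectors is componentwise.
   Context: A set $\mathcal{S}\subseteq\mathbb{R}^n$ is an invariant set for the discrete system $x_{k+1}=f_d(x_k)$ if $x_k\in\mathcal{S}$ implies $x_{k+1}\in\mathcal{S}$ for all $k\in\mathbb{N}$. *)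

theory Defs
  imports "HOL-Analysis.Analysis"
begin

definition invariant_set :: "'a set \<Rightarrow> ('a \<Rightarrow> 'a) \<Rightarrow> bool" where
  "invariant_set S f \<longleftrightarrow> (\<forall>x. x \<in> S \<longrightarrow> f x \<in> S)"

definition cont_diff :: "('a::real_normed_vector \<Rightarrow> 'b::real_normed_vector) \<Rightarrow> bool" where
  "cont_diff f \<longleftrightarrow> (\<exists>f'. (\<forall>x. (f has_derivative blinfun_apply (f' x)) (at x)) \<and> continuous_on UNIV f')"

definition polyhedron :: "real^'n^'m \<Rightarrow> real^'m \<Rightarrow> (real^'n) set" where
  "polyhedron G b = {x. \<forall>i. (G *v x) $ i \<le> b $ i}"

end

theory Submission
  imports Defs
begin

text \<open>
  Sufficiency: for \<open>x \<in> \<P>\<close> and \<open>H \<ge> 0\<close> we get \<open>G f(x) - b \<le> H (G x - b) \<le> 0\<close>.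
  Necessity: each \<open>g\<^sub>i(x) = b\<^sub>i - G\<^sub>i\<^sup>T f(x)\<close> is convex and nonnegative on \<open>\<P>\<close>,
  so by a convex Farkas lemma there is \<open>h\<^sub>i \<ge> 0\<close> with \<open>h\<^sub>i\<^sup>T (b - G x) \<le> g\<^sub>i(x)\<close>
  for all \<open>x\<close>; the \<open>h\<^sub>i\<close> are the rows of \<open>H\<close>.  The Farkas lemma comes from separating
  the origin from the convex set of attainable (constraint slack, objective bound)
  pairs; an interior point of \<open>\<P>\<close> is a Slater point, which makes the multiplier of
  the objective positive.
\<close>

lemma nonneg_if_nonneg_along_ray:
  fixes A k :: real
  assumes "\<And>c. 0 \<le> c \<Longrightarrow> 0 \<le> A + c * k"
  shows "0 \<le> k"
proof (rule ccontr)
  assume "\<not> 0 \<le> k"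
  then have "- (\<bar>A\<bar> + 1) / k * k = - (\<bar>A\<bar> + 1)" and "0 \<le> - (\<bar>A\<bar> + 1) / k"
    by (auto simp: divide_nonpos_neg)
  then show False
    using assms[of "- (\<bar>A\<bar> + 1) / k"] by linarith
qed

lemma nonneg_if_nonneg_plus_eps:
  fixes A k :: real
  assumes "\<And>e. 0 < e \<Longrightarrow> 0 \<le> A + e * k"
  shows "0 \<le> A"
proof (rule ccontr)
  assume A: "\<not> 0 \<le> A"
  show False
  proof (cases "k \<le> 0")
    case True
    then show False using A assms[of 1] by simp
  next
    case False
    then show False using A assms[of "- A / (2 * k)"] by (simp add: field_simps)
  qed
qed

lemma polyhedron_interior_row_strict:
  assumes x0: "x0 \<in> interior (polyhedron G b)" and row: "G $ j \<noteq> 0"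
  shows "(G *v x0) $ j < b $ j"
proof -
  let ?n = "norm (G $ j)"
  obtain e where e: "e > 0" "ball x0 e \<subseteq> polyhedron G b"
    using x0 by (meson mem_interior)
  have n: "?n > 0" using row by simp
  define y where "y = x0 + (e / (2 * ?n)) *\<^sub>R G $ j"
  have "dist x0 y = e / 2" using n e by (simp add: y_def dist_norm)
  then have "y \<in> polyhedron G b" using e by auto
  then have "(G *v y) $ j \<le> b $ j" by (simp add: polyhedron_def)
  moreover have "(G *v y) $ j = (G *v x0) $ j + e * ?n / 2"
    using n by (simp add: y_def matrix_vector_mul_component inner_add_right
        power2_norm_eq_inner[symmetric] power2_eq_square)
  moreover have "0 < e * ?n / 2" using e n by simp
  ultimately show ?thesis by linarith
qed

lemma convex_perturbation_set:
  fixes G :: "real^'n^'m" and g :: "real^'n \<Rightarrow> real"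
  assumes "convex_on UNIV g"
  shows "convex {(u, t). \<exists>x. (\<forall>j\<in>I. (G *v x) $ j - b $ j \<le> u $ j) \<and> g x < t}"
  unfolding convex_alt
proof (intro ballI allI impI, clarsimp)
  fix u1 t1 x1 u2 t2 x2 and a :: real
  assume 1: "\<forall>j\<in>I. (G *v x1) $ j - b $ j \<le> u1 $ j" "g x1 < t1"
    and 2: "\<forall>j\<in>I. (G *v x2) $ j - b $ j \<le> u2 $ j" "g x2 < t2"
    and a: "0 \<le> a" "a \<le> 1"
  let ?x = "(1 - a) *\<^sub>R x1 + a *\<^sub>R x2"
  have "g ?x \<le> (1 - a) * g x1 + a * g x2"
    using convex_onD[OF assms] a by simp
  also have "\<dots> < (1 - a) * t1 + a * t2"
  proof (cases "a = 0")
    case False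
    then have "a * g x2 < a * t2" using a 2 by simp
    moreover have "(1 - a) * g x1 \<le> (1 - a) * t1" using a 1 by (simp add: mult_left_mono)
    ultimately show ?thesis by linarith
  qed (use 1 in simp)
  finally have "g ?x < (1 - a) * t1 + a * t2" .
  moreover have "(G *v ?x) $ j - b $ j \<le> (1 - a) * u1 $ j + a * u2 $ j" if "j \<in> I" for j
  proof -
    have "(G *v ?x) $ j - b $ j = (1 - a) * ((G *v x1) $ j - b $ j) + a * ((G *v x2) $ j - b $ j)"
      by (simp add: matrix_vector_right_distrib matrix_vector_mult_scaleR algebra_simps)
    also have "\<dots> \<le> (1 - a) * u1 $ j + a * u2 $ j"
      using 1 2 that a by (intro add_mono mult_left_mono) auto
    finally show ?thesis .
  qed
  ultimately show "\<exists>x. (\<forall>j\<in>I. (G *v x) $ j - b $ j \<le> (1 - a) * u1 $ j + a * u2 $ j)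
                    \<and> g x < (1 - a) * t1 + a * t2"
    by blast
qed

lemma zero_notin_perturbation_set:
  fixes G :: "real^'n^'m" and g :: "real^'n \<Rightarrow> real"
  assumes nonneg: "\<forall>x \<in> polyhedron G b. 0 \<le> g x"
    and nonempty: "polyhedron G b \<noteq> {}"
  shows "0 \<notin> {(u, t). \<exists>x. (\<forall>j\<in>{j. G $ j \<noteq> 0}. (G *v x) $ j - b $ j \<le> u $ j) \<and> g x < t}"
proof
  assume "0 \<in> {(u, t). \<exists>x. (\<forall>j\<in>{j. G $ j \<noteq> 0}. (G *v x) $ j - b $ j \<le> u $ j) \<and> g x < t}"
  then obtain x where x: "\<forall>j. G $ j \<noteq> 0 \<longrightarrow> (G *v x) $ j \<le> b $ j" "g x < 0"
    by (auto simp: zero_prod_def)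
  obtain x0 where x0: "x0 \<in> polyhedron G b" using nonempty by blast
  have "(G *v x) $ j \<le> b $ j" for j
  proof (cases "G $ j = 0")
    case True
    then have "(G *v x) $ j = (G *v x0) $ j" by (simp add: matrix_vector_mul_component)
    with x0 show ?thesis by (simp add: polyhedron_def)
  qed (use x(1) in simp)
  then have "0 \<le> g x" using nonneg by (simp add: polyhedron_def)
  with x(2) show False by simp
qed

text \<open>Separation alone, without a Slater point, may still give \<open>\<mu> = 0\<close>.\<close>

lemma convex_farkas_multipliers:
  fixes G :: "real^'n^'m" and g :: "real^'n \<Rightarrow> real"
  assumes cvx: "convex_on UNIV g"
    and nonneg: "\<forall>x \<in> polyhedron G b. 0 \<le> g x"
    and nonempty: "polyhedron G b \<noteq> {}"
  obtains l \<mu> where "\<forall>j. 0 \<le> l $ j" "0 \<le> \<mu>" "(l, \<mu>) \<noteq> 0" "\<forall>j. G $ j = 0 \<longrightarrow> l $ j = 0"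
    "\<forall>x. 0 \<le> l \<bullet> (G *v x - b) + \<mu> * g x"
proof -
  \<comment> \<open>Zero rows are left out of \<open>S\<close>: an interior point cannot make them strict.\<close>
  define I where "I = {j. G $ j \<noteq> 0}"
  define S where "S = {(u, t). \<exists>x. (\<forall>j\<in>I. (G *v x) $ j - b $ j \<le> u $ j) \<and> g x < t}"
  have "0 \<notin> S"
    unfolding S_def I_def by (rule zero_notin_perturbation_set[OF nonneg nonempty])
  moreover have "convex S"
    unfolding S_def by (rule convex_perturbation_set[OF cvx])
  ultimately obtain a where a: "a \<noteq> 0" "\<forall>z\<in>S. 0 \<le> a \<bullet> z"
    using separating_hyperplane_set_0 by blast
  obtain l \<mu> where a_eq: "a = (l, \<mu>)" by (metis surj_pair)
  have sep: "0 \<le> l \<bullet> u + \<mu> * t"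
    if "\<forall>j\<in>I. (G *v x) $ j - b $ j \<le> u $ j" "g x < t" for x u t
    using a(2)[rule_format, of "(u, t)"] that by (auto simp: S_def a_eq inner_prod_def)
  let ?A = "l \<bullet> (- b) + \<mu> * (g 0 + 1)"
  \<comment> \<open>Perturb the slack \<open>u\<^sub>j\<close> at \<open>x = 0\<close>; for dropped rows in both directions.\<close>
  have ray: "0 \<le> ?A + c * (s * l $ j)" if "s = 1 \<or> j \<notin> I" "0 \<le> c" for j c s
  proof -
    have "0 \<le> l \<bullet> (- b + (c * s) *\<^sub>R axis j 1) + \<mu> * (g 0 + 1)"
      by (rule sep[of 0]) (use that in \<open>auto simp: axis_def\<close>)
    then show ?thesis by (simp add: inner_add_right inner_axis algebra_simps)
  qed
  have ray_nonneg: "0 \<le> s * l $ j" if "s = 1 \<or> j \<notin> I" for j s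
    by (rule nonneg_if_nonneg_along_ray[of ?A]) (rule ray[OF that])
  have l_nonneg: "0 \<le> l $ j" for j
    using ray_nonneg[of 1 j] by simp
  have l_zero: "l $ j = 0" if "j \<notin> I" for j
    using ray_nonneg[of 1 j] ray_nonneg[of "-1" j] that by simp
  have mu_nonneg: "0 \<le> \<mu>"
  proof (rule nonneg_if_nonneg_along_ray[of ?A])
    fix c :: real assume "0 \<le> c"
    then have "0 \<le> l \<bullet> (- b) + \<mu> * (g 0 + 1 + c)" by (intro sep[of 0]) auto
    then show "0 \<le> ?A + c * \<mu>" by (simp add: algebra_simps)
  qed
  have "0 \<le> l \<bullet> (G *v x - b) + \<mu> * g x" for x
  proof (rule nonneg_if_nonneg_plus_eps[of _ \<mu>])
    fix e :: real assume "0 < e"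
    then have "0 \<le> l \<bullet> (G *v x - b) + \<mu> * (g x + e)" by (intro sep[of x]) auto
    then show "0 \<le> l \<bullet> (G *v x - b) + \<mu> * g x + e * \<mu>" by (simp add: algebra_simps)
  qed
  with that l_nonneg mu_nonneg a(1) l_zero show thesis unfolding a_eq I_def by blast
qed

lemma convex_farkas_polyhedron:
  fixes G :: "real^'n^'m" and g :: "real^'n \<Rightarrow> real"
  assumes x0: "x0 \<in> interior (polyhedron G b)"
    and cvx: "convex_on UNIV g"
    and nonneg: "\<forall>x \<in> polyhedron G b. 0 \<le> g x"
  shows "\<exists>h. (\<forall>j. 0 \<le> h $ j) \<and> (\<forall>x. h \<bullet> (b - G *v x) \<le> g x)"
proof -
  have x0P: "x0 \<in> polyhedron G b" using x0 interior_subset by blast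
  obtain l \<mu> where l: "\<forall>j. 0 \<le> l $ j" and mu: "0 \<le> \<mu>" and nz: "(l, \<mu>) \<noteq> 0"
    and l_zero: "\<forall>j. G $ j = 0 \<longrightarrow> l $ j = 0"
    and weak: "\<forall>x. 0 \<le> l \<bullet> (G *v x - b) + \<mu> * g x"
    using convex_farkas_multipliers[OF cvx nonneg] x0P by blast
  have "\<mu> \<noteq> 0"
  proof
    assume "\<mu> = 0"
    then obtain j where j: "l $ j \<noteq> 0" using nz by (auto simp: zero_prod_def vec_eq_iff)
    then have "(G *v x0) $ j < b $ j"
      using l_zero polyhedron_interior_row_strict[OF x0] by blast
    then have "\<exists>k\<in>UNIV. l $ k * (G *v x0 - b) $ k < 0"
      using j l by (auto intro!: bexI[of _ j] mult_pos_neg simp: order_le_less)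
    moreover have "\<forall>k\<in>UNIV. l $ k * (G *v x0 - b) $ k \<le> 0"
      using l x0P by (auto simp: polyhedron_def mult_nonneg_nonpos)
    ultimately have "(\<Sum>k\<in>UNIV. l $ k * (G *v x0 - b) $ k) < (\<Sum>k\<in>UNIV. 0)"
      using sum_strict_mono_ex1[of UNIV "\<lambda>k. l $ k * (G *v x0 - b) $ k" "\<lambda>_. 0"] by simp
    then have "l \<bullet> (G *v x0 - b) < 0" by (simp add: inner_vec_def)
    with weak \<open>\<mu> = 0\<close> show False by (metis add.right_neutral mult_zero_left not_le)
  qed
  then have "0 < \<mu>" using mu by simp
  have "(1 / \<mu>) *\<^sub>R l \<bullet> (b - G *v x) \<le> g x" for x
    using weak[rule_format, of x] \<open>0 < \<mu>\<close>
    by (simp add: inner_diff_right field_simps)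
  moreover have "\<forall>j. 0 \<le> ((1 / \<mu>) *\<^sub>R l) $ j" using l \<open>0 < \<mu>\<close> by simp
  ultimately show ?thesis by blast
qed

lemma invariant_polyhedron_if_multiplier:
  fixes G :: "real^'n^'m" and H :: "real^'m^'m"
  assumes H_nonneg: "\<forall>i j. 0 \<le> H $ i $ j"
    and H_ineq: "\<forall>x i. (H *v (G *v x) - G *v f x) $ i \<ge> (H *v b - b) $ i"
  shows "invariant_set (polyhedron G b) f"
  unfolding invariant_set_def
proof (intro allI impI)
  fix x assume x: "x \<in> polyhedron G b"
  have "(G *v f x) $ i \<le> b $ i" for i
  proof -
    have "H $ i \<bullet> (G *v x - b) \<le> 0"
      unfolding inner_vec_def
      using H_nonneg x by (intro sum_nonpos) (auto simp: polyhedron_def mult_nonneg_nonpos)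
    moreover have "(H *v b - b) $ i \<le> (H *v (G *v x) - G *v f x) $ i" using H_ineq by blast
    ultimately show ?thesis
      by (simp add: matrix_vector_mul_component inner_diff_right)
  qed
  then show "f x \<in> polyhedron G b" by (simp add: polyhedron_def)
qed

lemma multiplier_if_invariant_polyhedron:
  fixes G :: "real^'n^'m" and b :: "real^'m" and f :: "real^'n \<Rightarrow> real^'n"
  assumes "interior (polyhedron G b) \<noteq> {}"
    and cvx: "\<forall>i. convex_on UNIV (\<lambda>x. b $ i - (G $ i) \<bullet> f x)"
    and inv: "invariant_set (polyhedron G b) f"
  shows "\<exists>H :: real^'m^'m. (\<forall>i j. 0 \<le> H $ i $ j) \<and>
           (\<forall>x i. (H *v (G *v x) - G *v f x) $ i \<ge> (H *v b - b) $ i)"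
proof -
  obtain x0 where x0: "x0 \<in> interior (polyhedron G b)" using assms(1) by blast
  have "\<forall>x \<in> polyhedron G b. 0 \<le> b $ i - (G $ i) \<bullet> f x" for i
    using inv by (auto simp: invariant_set_def polyhedron_def matrix_vector_mul_component)
  then have "\<forall>i. \<exists>h. (\<forall>j. 0 \<le> h $ j) \<and> (\<forall>x. h \<bullet> (b - G *v x) \<le> b $ i - (G $ i) \<bullet> f x)"
    using convex_farkas_polyhedron[OF x0 cvx[rule_format]] by blast
  then obtain h where h_nonneg: "\<And>i j. 0 \<le> h i $ j"
    and h_bound: "\<And>i x. h i \<bullet> (b - G *v x) \<le> b $ i - (G $ i) \<bullet> f x"
    by metis
  have "((\<chi> i. h i) *v b - b) $ i \<le> ((\<chi> i. h i) *v (G *v x) - G *v f x) $ i" for x i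
    using h_bound[of i x] by (simp add: matrix_vector_mul_component inner_diff_right)
  with h_nonneg show ?thesis by (intro exI[of _ "\<chi> i. h i"]) simp
qed

theorem theorem4:
  fixes G :: "real^'n^'m" and b :: "real^'m" and f :: "real^'n \<Rightarrow> real^'n"
  assumes "interior (polyhedron G b) \<noteq> {}"
    and "cont_diff f"
    and "\<forall>i. convex_on UNIV (\<lambda>x. b $ i - (G $ i) \<bullet> f x)"
  shows "invariant_set (polyhedron G b) f \<longleftrightarrow>
    (\<exists>H :: real^'m^'m. (\<forall>i j. 0 \<le> H $ i $ j) \<and>
       (\<forall>x i. (H *v (G *v x) - G *v f x) $ i \<ge> (H *v b - b) $ i))"
  using multiplier_if_invariant_polyhedron[OF assms(1,3)] invariant_polyhedron_if_multiplier
  by blast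

end
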